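(* Let $q\ge 2$ be an integer, $M\in\mathbb{Z}$, $N\in\mathbb{N}$, and let $a_{M+1},\dots,a_{M+N}$ be complex numbers. Then \[ \frac{q}{\varphi(q)}\sum_{\xi\in G_1(q)}\Bigl|\sum_{n=M+1}^{M+N}a_n\,\xi(n)\Bigr|^2 = q\mathop{\sum_{n=M+1}^{M+N}\ \sum_{n'=M+1}^{M+N}}_{\substack{\gcd(nn',q)=1\\ n\equiv n' \ (\mathrm{mod}\ q)}}\overline{a_n}\,a_{n'}\;e\!\left(\frac{\overline{n}}{q}\cdot\frac{n'-n}{q}\right), \] where $\overline{n}$ denotes any integer with $n\overline{n}\equiv 1 \pmod q$ (note $(n'-n)/q$ is an integer in each term). Moreover $G_1(q)$ consists of exactly $\varphi(q)$ characters, namely $\xi_0\chi$ where $\xi_0$ is any fixed element of $G_1(q)$ and $\chi$ runs over the Dirichlet characters modulo $q$ (viewed as characters modulo $q^2$).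
   Context: $e(x)=\exp(2\pi i x)$ and $\varphi$ is Euler's function. For a positive integer $q$, $G_1(q)$ denotes the set of Dirichlet characters $\xi$ modulo $q^2$ such that $\xi(x)=e\!\left(\frac{x-1}{q^2}\right)$ for every integer $x\equiv 1\pmod q$. Dirichlet characters modulo $q^2$ vanish on integers not coprime to $q$. *)

theory Defs
  imports "HOL-Analysis.Analysis" "HOL-Number_Theory.Number_Theory"
begin

definition e :: "real \<Rightarrow> complex" where
  "e x = exp (2 * pi * \<i> * complex_of_real x)"

definition dirichlet_char :: "int \<Rightarrow> (int \<Rightarrow> complex) \<Rightarrow> bool" where
  "dirichlet_char m chi \<longleftrightarrow> m \<ge> 1 \<and>
     (\<forall>n. chi (n + m) = chi n) \<and>
     (\<forall>a b. chi (a * b) = chi a * chi b) \<and>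
     chi 1 = 1 \<and>
     (\<forall>n. chi n = 0 \<longleftrightarrow> \<not> coprime n m)"

definition G1 :: "int \<Rightarrow> (int \<Rightarrow> complex) set" where
  "G1 q = {\<xi>. dirichlet_char (q^2) \<xi> \<and>
     (\<forall>x. [x = 1] (mod q) \<longrightarrow> \<xi> x = e (real_of_int (x - 1) / real_of_int (q^2)))}"

end

theory Submission
  imports Defs
begin

(* The map x |-> e((x - 1)/q^2) is a character of the subgroup 1 + qZ of the units modulo q^2,
   and characters of subgroups of (Z/mZ)^* extend to Dirichlet characters; hence G1(q) is
   nonempty.  Two elements of G1(q) differ by a character modulo q^2 that is trivial on 1 + qZ,
   i.e. by a character modulo q, so G1(q) = xi0 * {chi mod q} has phi(q) elements.  Expanding the
   square turns the mean value into a double sum of cnj(a n) a n' times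
   sum_{xi in G1(q)} cnj(xi n) xi n'.  For n = n' (mod q) every summand equals
   xi(n* n') with n n* = 1 (mod q^2) and n* n' = 1 (mod q), which the definition of G1(q) fixes as
   e(nbar n/q * (n' - n)/q); for n <> n' (mod q) orthogonality of the characters modulo q makes the
   sum vanish. *)

lemma e_add: "e (x + y) = e x * e y"
  unfolding e_def by (simp add: distrib_left exp_add)

lemma e_eq_1_iff: "e x = 1 \<longleftrightarrow> x \<in> \<int>"
proof -
  have "e x = 1 \<longleftrightarrow> (\<exists>n::int. 2 * pi * x = of_int (2 * n) * pi)"
    unfolding e_def exp_eq_1 by simp
  also have "\<dots> \<longleftrightarrow> (\<exists>n::int. x = of_int n)"
    by (intro ex_cong1) auto
  finally show ?thesis by (auto elim: Ints_cases)
qed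

lemma e_of_int [simp]: "e (of_int k) = 1"
  by (simp add: e_eq_1_iff)

lemma e_0 [simp]: "e 0 = 1"
  using e_of_int[of 0] by simp

lemma e_add_of_int: "e (x + of_int k) = e x"
  by (simp add: e_add)

lemma norm_e [simp]: "norm (e x) = 1"
  unfolding e_def by simp

lemma cnj_e_mult: "cnj (e x) * e x = 1"
  using complex_norm_square[of "e x"] by (simp add: mult.commute)

lemma e_power: "e x ^ k = e (real k * x)"
  unfolding e_def by (simp add: exp_of_nat_mult[symmetric] mult_ac)

lemma e_of_int_divide_cong:
  assumes "[a = b] (mod d)"
  shows "e (of_int a / of_int d) = e (of_int b / of_int d)"
proof (cases "d = 0")
  case True
  then show ?thesis using assms by simp
next
  case False
  obtain t where "a = b + d * t" using assms by (metis cong_iff_dvd_diff dvdE diff_eq_eq add.commute)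
  then have "of_int a / of_int d = of_int b / of_int d + (of_int t :: real)"
    using False by (simp add: field_simps)
  then show ?thesis by (simp add: e_add_of_int)
qed

section \<open>Dirichlet characters\<close>

lemma euler_theorem_int:
  fixes a m :: int
  assumes "m > 1" "coprime a m"
  shows "[a ^ totient (nat m) = 1] (mod m)"
proof -
  interpret residues m "residue_ring m" using assms(1) by (simp add: residues_def)
  show ?thesis using euler_theorem assms(2) by blast
qed

lemma cong_mult_power_totient_minus_1:
  fixes a m :: int
  assumes "m > 1" "coprime a m"
  shows "[a * a ^ (totient (nat m) - 1) = 1] (mod m)"
  using euler_theorem_int[OF assms] assms(1)
  by (simp add: power_Suc[symmetric] del: power_Suc)

lemma card_coprime_residues_int:
  fixes m :: int
  assumes "m > 1"
  shows "card {x \<in> {0..<m}. coprime x m} = totient (nat m)"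
proof -
  interpret residues m "residue_ring m" using assms by (simp add: residues_def)
  have "{x \<in> {0..<m}. coprime x m} = Units (residue_ring m)"
    using assms by (auto simp: res_units_eq le_less)
  then show ?thesis by (simp add: totient_eq)
qed

lemma coprime_add_self_left_iff:
  fixes a b :: int
  shows "coprime (a + b) b \<longleftrightarrow> coprime a b"
  by (rule coprime_cong_cong_left) (simp add: cong_def)

lemma dirichlet_char_periodic:
  assumes "dirichlet_char m chi"
  shows "chi (n + k * m) = chi n"
proof (induction k rule: int_induct[where k = 0])
  case base
  then show ?case by simp
next
  case (step1 k)
  have "chi (n + (k + 1) * m) = chi ((n + k * m) + m)" by (simp add: algebra_simps)
  with step1 assms show ?case unfolding dirichlet_char_def by simp
next
  case (step2 k)
  have "chi (n + k * m) = chi ((n + (k - 1) * m) + m)" by (simp add: algebra_simps)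
  with step2 assms show ?case unfolding dirichlet_char_def by simp
qed

lemma dirichlet_char_cong:
  assumes "dirichlet_char m chi" "[a = b] (mod m)"
  shows "chi a = chi b"
proof -
  obtain k where "a = b + k * m"
    using assms(2) by (metis cong_iff_dvd_diff dvdE diff_eq_eq add.commute mult.commute)
  then show ?thesis using dirichlet_char_periodic[OF assms(1)] by simp
qed

lemma dirichlet_char_mult: "dirichlet_char m chi \<Longrightarrow> chi (a * b) = chi a * chi b"
  unfolding dirichlet_char_def by blast

lemma dirichlet_char_one: "dirichlet_char m chi \<Longrightarrow> chi 1 = 1"
  unfolding dirichlet_char_def by blast

lemma dirichlet_char_eq_0_iff: "dirichlet_char m chi \<Longrightarrow> chi n = 0 \<longleftrightarrow> \<not> coprime n m"
  unfolding dirichlet_char_def by blast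

lemma dirichlet_char_power: "dirichlet_char m chi \<Longrightarrow> chi (a ^ k) = chi a ^ k"
  by (induction k) (auto simp: dirichlet_char_mult dirichlet_char_one)

lemma dirichlet_char_root_of_unity:
  assumes "dirichlet_char m chi" "m > 1" "coprime x m"
  shows "chi x ^ totient (nat m) = 1"
  using dirichlet_char_power[OF assms(1)] dirichlet_char_one[OF assms(1)]
    dirichlet_char_cong[OF assms(1) euler_theorem_int[OF assms(2,3)]]
  by simp

lemma cnj_dirichlet_char_mult:
  assumes "dirichlet_char m chi" "m > 1" "coprime x m"
  shows "cnj (chi x) * chi x = 1"
proof -
  have "norm (chi x) = 1"
    using power_eq_1_iff[OF dirichlet_char_root_of_unity[OF assms]] assms(2) by auto
  then show ?thesis using complex_norm_square[of "chi x"] by (simp add: mult.commute)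
qed

lemma cnj_dirichlet_char:
  assumes "dirichlet_char m chi" "m > 1" "[x * y = 1] (mod m)"
  shows "cnj (chi x) = chi y"
proof -
  have "coprime x m" using assms(3) coprime_iff_invertible_int by blast
  have "chi x * chi y = 1"
    using dirichlet_char_cong[OF assms(1,3)] dirichlet_char_mult[OF assms(1)]
      dirichlet_char_one[OF assms(1)] by simp
  then have "cnj (chi x) = (cnj (chi x) * chi x) * chi y" by (simp add: mult.assoc)
  then show ?thesis using cnj_dirichlet_char_mult[OF assms(1,2) \<open>coprime x m\<close>] by simp
qed

lemma dirichlet_char_times:
  "dirichlet_char m a \<Longrightarrow> dirichlet_char m b \<Longrightarrow> dirichlet_char m (\<lambda>n. a n * b n)"
  unfolding dirichlet_char_def by (auto simp: mult_ac)

lemma dirichlet_char_cnj: "dirichlet_char m chi \<Longrightarrow> dirichlet_char m (\<lambda>n. cnj (chi n))"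
  unfolding dirichlet_char_def by auto

lemma dirichlet_char_eqI:
  assumes "dirichlet_char m a" "dirichlet_char m b" "\<And>n. coprime n m \<Longrightarrow> a n = b n"
  shows "a = b"
proof
  fix n
  show "a n = b n"
    using assms dirichlet_char_eq_0_iff[OF assms(1), of n] dirichlet_char_eq_0_iff[OF assms(2), of n]
    by (cases "coprime n m") auto
qed

lemma finite_dirichlet_chars:
  assumes "m > 1"
  shows "finite {chi. dirichlet_char m chi}"
proof -
  define X where "X = {chi. dirichlet_char m chi}"
  define S where "S = insert 0 {z :: complex. z ^ totient (nat m) = 1}"
  have "finite S"
    unfolding S_def using finite_roots_unity[of "totient (nat m)"] assms by (simp add: Suc_le_eq)
  have char_values: "chi n \<in> S" if "chi \<in> X" for chi n
    using that dirichlet_char_root_of_unity[OF _ assms] dirichlet_char_eq_0_iff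
    unfolding S_def X_def by (cases "coprime n m") auto
  have "(\<lambda>chi. restrict chi {0..<m}) ` X \<subseteq> PiE {0..<m} (\<lambda>_. S)"
    using char_values by auto
  moreover have "finite (PiE {0..<m} (\<lambda>_. S))"
    using \<open>finite S\<close> by (simp add: finite_PiE)
  ultimately have "finite ((\<lambda>chi. restrict chi {0..<m}) ` X)"
    by (rule finite_subset)
  moreover have "inj_on (\<lambda>chi. restrict chi {0..<m}) X"
  proof (rule inj_onI)
    fix a b
    assume "a \<in> X" "b \<in> X" and restr: "restrict a {0..<m} = restrict b {0..<m}"
    show "a = b"
    proof
      fix n
      have "n mod m \<in> {0..<m}" using assms by simp
      then have "a (n mod m) = b (n mod m)" using fun_cong[OF restr, of "n mod m"] by simp
      moreover have "[n mod m = n] (mod m)" by (simp add: cong_def)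
      ultimately show "a n = b n"
        using dirichlet_char_cong[of m a "n mod m" n] dirichlet_char_cong[of m b "n mod m" n]
          \<open>a \<in> X\<close> \<open>b \<in> X\<close>
        unfolding X_def by simp
    qed
  qed
  ultimately show ?thesis unfolding X_def[symmetric] by (rule finite_imageD)
qed

definition principal_char :: "int \<Rightarrow> int \<Rightarrow> complex" where
  "principal_char m n = (if coprime n m then 1 else 0)"

lemma dirichlet_char_principal:
  assumes "m \<ge> 1"
  shows "dirichlet_char m (principal_char m)"
  using assms unfolding dirichlet_char_def principal_char_def by (simp add: coprime_add_self_left_iff)

lemma dirichlet_char_power_modulus:
  assumes "dirichlet_char q chi" "k > 0"
  shows "dirichlet_char (q ^ k) chi"
proof -
  have "q \<ge> 1" using assms(1) unfolding dirichlet_char_def by simp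
  moreover have "chi (n + q ^ k) = chi n" for n
    using assms by (intro dirichlet_char_cong[OF assms(1)])
      (simp add: cong_iff_dvd_diff)
  ultimately show ?thesis
    using assms unfolding dirichlet_char_def by simp
qed

lemma dirichlet_char_from_power_modulus:
  assumes chi: "dirichlet_char (d ^ k) chi" and "k > 0" "d \<ge> 1"
    and trivial: "\<And>x. [x = 1] (mod d) \<Longrightarrow> chi x = 1"
  shows "dirichlet_char d chi"
proof -
  have "chi (n + d) = chi n" for n
  proof (cases "coprime n d")
    case True
    then obtain n' where n': "[n * n' = 1] (mod d ^ k)"
      using \<open>k > 0\<close> cong_solve_coprime_int[of n "d ^ k"] by auto
    have "d dvd n * n' - 1"
      using cong_dvd_modulus[OF n', of d] \<open>k > 0\<close> by (simp add: cong_iff_dvd_diff)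
    then have "d dvd (n * n' - 1) + n' * d" by simp
    then have "[n' * (n + d) = 1] (mod d)" by (simp add: cong_iff_dvd_diff algebra_simps)
    have "[n * n' * (n + d) = 1 * (n + d)] (mod d ^ k)" by (rule cong_scalar_right[OF n'])
    then have "chi (n + d) = chi (n * (n' * (n + d)))"
      by (intro dirichlet_char_cong[OF chi]) (simp add: cong_sym_eq mult.assoc)
    also have "\<dots> = chi n * chi (n' * (n + d))" by (rule dirichlet_char_mult[OF chi])
    also have "chi (n' * (n + d)) = 1" by (rule trivial) fact
    finally show ?thesis by simp
  next
    case False
    then have "\<not> coprime (n + d) d" by (simp add: coprime_add_self_left_iff)
    with False show ?thesis
      using dirichlet_char_eq_0_iff[OF chi, of n] dirichlet_char_eq_0_iff[OF chi, of "n + d"] \<open>k > 0\<close>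
      by simp
  qed
  with assms show ?thesis unfolding dirichlet_char_def by simp
qed

section \<open>Extending characters of subgroups of the unit group\<close>

(* A subgroup of (Z/mZ)^*, represented by its full preimage in Z, and a character on it. *)
definition unit_subgroup :: "int \<Rightarrow> int set \<Rightarrow> bool" where
  "unit_subgroup m H \<longleftrightarrow> 1 \<in> H \<and> (\<forall>x\<in>H. \<forall>y\<in>H. x * y \<in> H) \<and> (\<forall>x\<in>H. coprime x m) \<and>
     (\<forall>x y. x \<in> H \<longrightarrow> [x = y] (mod m) \<longrightarrow> y \<in> H)"

definition subgroup_char :: "int \<Rightarrow> int set \<Rightarrow> (int \<Rightarrow> complex) \<Rightarrow> bool" where
  "subgroup_char m H psi \<longleftrightarrow> psi 1 = 1 \<and> (\<forall>x\<in>H. \<forall>y\<in>H. psi (x * y) = psi x * psi y) \<and>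
     (\<forall>x\<in>H. \<forall>y. [x = y] (mod m) \<longrightarrow> psi y = psi x)"

lemma unit_subgroup_one: "unit_subgroup m H \<Longrightarrow> 1 \<in> H"
  and unit_subgroup_mult: "unit_subgroup m H \<Longrightarrow> x \<in> H \<Longrightarrow> y \<in> H \<Longrightarrow> x * y \<in> H"
  and unit_subgroup_coprime: "unit_subgroup m H \<Longrightarrow> x \<in> H \<Longrightarrow> coprime x m"
  and unit_subgroup_cong: "unit_subgroup m H \<Longrightarrow> x \<in> H \<Longrightarrow> [x = y] (mod m) \<Longrightarrow> y \<in> H"
  unfolding unit_subgroup_def by blast+

lemma unit_subgroup_power: "unit_subgroup m H \<Longrightarrow> x \<in> H \<Longrightarrow> x ^ n \<in> H"
  by (induction n) (auto intro: unit_subgroup_one unit_subgroup_mult)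

lemma unit_subgroup_inverse:
  assumes "m > 1" "unit_subgroup m H" "x \<in> H"
  obtains x' where "x' \<in> H" "[x' * x = 1] (mod m)"
  using cong_mult_power_totient_minus_1[OF assms(1) unit_subgroup_coprime[OF assms(2,3)]]
    unit_subgroup_power[OF assms(2,3)]
  by (metis mult.commute)

lemma unit_subgroup_cancel:
  assumes "m > 1" "unit_subgroup m H" "x \<in> H" "z \<in> H" "[x * y = z] (mod m)"
  shows "y \<in> H"
proof -
  obtain x' where x': "x' \<in> H" "[x' * x = 1] (mod m)"
    using unit_subgroup_inverse[OF assms(1-3)] .
  have "[x' * z = (x' * x) * y] (mod m)"
    using cong_scalar_left[OF cong_sym[OF assms(5)], of x'] by (simp add: mult.assoc)
  also have "[(x' * x) * y = 1 * y] (mod m)" by (rule cong_scalar_right[OF x'(2)])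
  finally show ?thesis
    using unit_subgroup_cong[OF assms(2) unit_subgroup_mult[OF assms(2) x'(1) assms(4)]] by simp
qed

lemma unit_subgroup_cong_one:
  assumes "k > 0"
  shows "unit_subgroup (d ^ k) {x. [x = 1] (mod d)}"
  unfolding unit_subgroup_def
proof (intro conjI ballI allI impI)
  fix x y
  assume x: "x \<in> {x. [x = 1] (mod d)}"
  then show "coprime x (d ^ k)"
    using coprime_cong_cong_left[of x 1 d] assms by simp
  show "y \<in> {x. [x = 1] (mod d)}" if "[x = y] (mod d ^ k)"
    using x cong_dvd_modulus[OF that, of d] assms by (auto intro: cong_trans cong_sym)
  show "x * y \<in> {x. [x = 1] (mod d)}" if "y \<in> {x. [x = 1] (mod d)}"
    using x that cong_mult[of x 1 d y 1] by simp
qed simp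

lemma subgroup_char_one: "subgroup_char m H psi \<Longrightarrow> psi 1 = 1"
  and subgroup_char_mult:
    "subgroup_char m H psi \<Longrightarrow> x \<in> H \<Longrightarrow> y \<in> H \<Longrightarrow> psi (x * y) = psi x * psi y"
  and subgroup_char_cong: "subgroup_char m H psi \<Longrightarrow> x \<in> H \<Longrightarrow> [x = y] (mod m) \<Longrightarrow> psi y = psi x"
  unfolding subgroup_char_def by blast+

lemma subgroup_char_power:
  assumes "unit_subgroup m H" "subgroup_char m H psi" "x \<in> H"
  shows "psi (x ^ n) = psi x ^ n"
  by (induction n)
    (simp_all add: subgroup_char_one[OF assms(2)] subgroup_char_mult[OF assms(2,3)]
      unit_subgroup_power[OF assms(1,3)])

lemma subgroup_char_nonzero:
  assumes "m > 1" "unit_subgroup m H" "subgroup_char m H psi" "x \<in> H"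
  shows "psi x \<noteq> 0"
proof -
  obtain x' where x': "x' \<in> H" "[x' * x = 1] (mod m)"
    using unit_subgroup_inverse[OF assms(1,2,4)] .
  have "psi x' * psi x = 1"
    using subgroup_char_cong[OF assms(3) unit_subgroup_one[OF assms(2)] cong_sym[OF x'(2)]]
      subgroup_char_mult[OF assms(3) x'(1) assms(4)] subgroup_char_one[OF assms(3)] by simp
  then show ?thesis by auto
qed

lemma unit_subgroup_least_power:
  assumes "m > 1" "unit_subgroup m H" "coprime g m"
  obtains k where "k > 0" "g ^ k \<in> H" "\<And>r. 0 < r \<Longrightarrow> r < k \<Longrightarrow> g ^ r \<notin> H"
proof -
  have "g ^ totient (nat m) \<in> H"
    using unit_subgroup_cong[OF assms(2) unit_subgroup_one[OF assms(2)]]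
      cong_sym[OF euler_theorem_int[OF assms(1,3)]] by blast
  moreover have "totient (nat m) > 0" using assms(1) by simp
  ultimately have "\<exists>k. 0 < k \<and> g ^ k \<in> H" by blast
  then show ?thesis
    using that LeastI_ex[of "\<lambda>k. 0 < k \<and> g ^ k \<in> H"] not_less_Least[of _ "\<lambda>k. 0 < k \<and> g ^ k \<in> H"]
    by blast
qed

(* Adjoining g to H: H' = H<g> and psi'(g^j h) = c^j psi(h).  This is well defined because k is
   the least positive exponent with g^k in H and c^k = psi(g^k). *)
locale subgroup_char_adjoin =
  fixes m :: int and H :: "int set" and psi :: "int \<Rightarrow> complex"
    and g :: int and k :: nat and c :: complex
  assumes modulus: "m > 1" and subgroup: "unit_subgroup m H" and char: "subgroup_char m H psi"
    and coprime_g: "coprime g m" and k_pos: "k > 0" and power_k: "g ^ k \<in> H"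
    and k_least: "\<And>r. 0 < r \<Longrightarrow> r < k \<Longrightarrow> g ^ r \<notin> H"
    and c_root: "c ^ k = psi (g ^ k)"
begin

definition H' :: "int set" where
  "H' = {x. \<exists>j h. h \<in> H \<and> [x = g ^ j * h] (mod m)}"

definition psi' :: "int \<Rightarrow> complex" where
  "psi' x = (let (j, h) = (SOME (j, h). h \<in> H \<and> [x = g ^ j * h] (mod m)) in c ^ j * psi h)"

lemma dvd_if_power_in_subgroup:
  assumes "g ^ j \<in> H"
  shows "k dvd j"
proof -
  have "(g ^ k) ^ (j div k) * g ^ (j mod k) = g ^ j"
    by (simp only: power_mult[symmetric] power_add[symmetric] mult_div_mod_eq)
  then have "[(g ^ k) ^ (j div k) * g ^ (j mod k) = g ^ j] (mod m)" by simp
  then have "g ^ (j mod k) \<in> H"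
    by (rule unit_subgroup_cancel[OF modulus subgroup unit_subgroup_power[OF subgroup power_k] assms])
  then have "j mod k = 0" using k_least[of "j mod k"] k_pos by auto
  then show ?thesis by (simp add: dvd_eq_mod_eq_0)
qed

lemma representation_value_eq:
  assumes h: "h \<in> H" "h' \<in> H" and rep: "[g ^ j * h = g ^ j' * h'] (mod m)" and "j' \<le> j"
  shows "c ^ j * psi h = c ^ j' * psi h'"
proof -
  define d where "d = j - j'"
  have j: "j = j' + d" using \<open>j' \<le> j\<close> unfolding d_def by simp
  have "[g ^ j' * (g ^ d * h) = g ^ j' * h'] (mod m)"
    using rep unfolding j by (simp add: power_add mult.assoc)
  then have shift: "[g ^ d * h = h'] (mod m)"
    using cong_mult_lcancel[of "g ^ j'" m] coprime_g by simp
  then have "g ^ d \<in> H"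
    using unit_subgroup_cancel[OF modulus subgroup h] by (simp add: mult.commute)
  then obtain t where d: "d = k * t" using dvd_if_power_in_subgroup by blast
  have "psi h' = psi (g ^ d) * psi h"
    using subgroup_char_cong[OF char _ shift] subgroup_char_mult[OF char \<open>g ^ d \<in> H\<close> h(1)]
      unit_subgroup_mult[OF subgroup \<open>g ^ d \<in> H\<close> h(1)] by simp
  also have "psi (g ^ d) = c ^ d"
    using subgroup_char_power[OF subgroup char power_k, of t] c_root
    by (simp add: d power_mult)
  finally show ?thesis unfolding j by (simp add: power_add mult_ac)
qed

lemma psi'_eq:
  assumes "h \<in> H" "[x = g ^ j * h] (mod m)"
  shows "psi' x = c ^ j * psi h"
proof -
  define P where "P = (\<lambda>(j, h). h \<in> H \<and> [x = g ^ j * h] (mod m))"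
  obtain j' h' where some: "(SOME p. P p) = (j', h')" by fastforce
  have "P (j', h')" using someI[of P "(j, h)"] assms unfolding some[symmetric] P_def by simp
  then have "h' \<in> H" "[g ^ j * h = g ^ j' * h'] (mod m)"
    using assms unfolding P_def by (auto intro: cong_trans cong_sym)
  then have "c ^ j * psi h = c ^ j' * psi h'"
    using representation_value_eq[OF assms(1)] representation_value_eq[OF _ assms(1)] cong_sym
    by (metis nat_le_linear)
  then show ?thesis unfolding psi'_def P_def[symmetric] some by simp
qed

lemma in_H'I: "h \<in> H \<Longrightarrow> [x = g ^ j * h] (mod m) \<Longrightarrow> x \<in> H'"
  unfolding H'_def by blast

lemma in_H'E:
  assumes "x \<in> H'"
  obtains j h where "h \<in> H" "[x = g ^ j * h] (mod m)"
  using assms unfolding H'_def by blast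

lemma subset_H': "H \<subseteq> H'"
  using in_H'I[of _ _ 0] by auto

lemma g_in_H': "g \<in> H'"
  using in_H'I[OF unit_subgroup_one[OF subgroup], of g 1] by simp

lemma psi'_on_subgroup: "x \<in> H \<Longrightarrow> psi' x = psi x"
  using psi'_eq[of x x 0] by simp

lemma psi'_g: "psi' g = c"
  using psi'_eq[OF unit_subgroup_one[OF subgroup], of g 1] subgroup_char_one[OF char] by simp

lemma H'_mult:
  assumes "x \<in> H'" "y \<in> H'"
  shows "x * y \<in> H'" and "psi' (x * y) = psi' x * psi' y"
proof -
  obtain j h where x: "h \<in> H" "[x = g ^ j * h] (mod m)" using assms(1) by (rule in_H'E)
  obtain j' h' where y: "h' \<in> H" "[y = g ^ j' * h'] (mod m)" using assms(2) by (rule in_H'E)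
  have hh': "h * h' \<in> H" by (rule unit_subgroup_mult[OF subgroup x(1) y(1)])
  have rep: "[x * y = g ^ (j + j') * (h * h')] (mod m)"
    using cong_mult[OF x(2) y(2)] by (simp add: power_add mult_ac)
  then show "x * y \<in> H'" by (rule in_H'I[OF hh'])
  have "psi' (x * y) = c ^ (j + j') * psi (h * h')" by (rule psi'_eq[OF hh' rep])
  also have "\<dots> = (c ^ j * psi h) * (c ^ j' * psi h')"
    using subgroup_char_mult[OF char x(1) y(1)] by (simp add: power_add mult_ac)
  finally show "psi' (x * y) = psi' x * psi' y" by (simp add: psi'_eq[OF x] psi'_eq[OF y])
qed

lemma H'_cong:
  assumes "x \<in> H'" "[x = y] (mod m)"
  shows "y \<in> H'" and "psi' y = psi' x"
proof -
  obtain j h where x: "h \<in> H" "[x = g ^ j * h] (mod m)" using assms(1) by (rule in_H'E)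
  then have "[y = g ^ j * h] (mod m)" using assms(2) by (meson cong_sym cong_trans)
  then show "y \<in> H'" and "psi' y = psi' x"
    using in_H'I[OF x(1)] psi'_eq[OF x(1)] psi'_eq[OF x] by simp_all
qed

lemma unit_subgroup_H': "unit_subgroup m H'"
  unfolding unit_subgroup_def
proof (intro conjI ballI allI impI)
  show "1 \<in> H'" using subset_H' unit_subgroup_one[OF subgroup] by blast
next
  fix x y
  assume "x \<in> H'"
  then obtain j h where "h \<in> H" and rep: "[x = g ^ j * h] (mod m)" by (rule in_H'E)
  then have "coprime (g ^ j * h) m" using coprime_g unit_subgroup_coprime[OF subgroup] by simp
  then show "coprime x m" using coprime_cong_cong_left[OF rep] by simp
  show "y \<in> H'" if "[x = y] (mod m)" using H'_cong(1) \<open>x \<in> H'\<close> that .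
  show "x * y \<in> H'" if "y \<in> H'" using H'_mult(1) \<open>x \<in> H'\<close> that .
qed

lemma subgroup_char_psi': "subgroup_char m H' psi'"
  unfolding subgroup_char_def
proof (intro conjI ballI allI impI)
  show "psi' 1 = 1"
    using psi'_on_subgroup[OF unit_subgroup_one[OF subgroup]] subgroup_char_one[OF char] by simp
  fix x y
  assume "x \<in> H'"
  show "psi' (x * y) = psi' x * psi' y" if "y \<in> H'" using H'_mult(2) \<open>x \<in> H'\<close> that .
  show "psi' y = psi' x" if "[x = y] (mod m)" using H'_cong(2) \<open>x \<in> H'\<close> that .
qed

end

lemma complex_root_exists:
  assumes "k > 0"
  obtains c where "c ^ k = (z :: complex)"
proof (cases "z = 0")
  case True
  then show ?thesis using that[of 0] assms by simp
next
  case False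
  have "exp (Ln z / of_nat k) ^ k = z"
    using assms False by (simp add: exp_of_nat_mult[symmetric])
  then show ?thesis by (rule that)
qed

lemma dirichlet_char_of_subgroup_char:
  assumes "m > 1" "unit_subgroup m H" "subgroup_char m H psi" and units: "\<And>x. coprime x m \<Longrightarrow> x \<in> H"
  shows "dirichlet_char m (\<lambda>n. if coprime n m then psi n else 0)"
  unfolding dirichlet_char_def
proof (intro conjI allI)
  fix n a b
  show "(if coprime (n + m) m then psi (n + m) else 0) = (if coprime n m then psi n else 0)"
    using subgroup_char_cong[OF assms(3) units, of n "n + m"]
    by (simp add: coprime_add_self_left_iff cong_def)
  show "(if coprime (a * b) m then psi (a * b) else 0) =
      (if coprime a m then psi a else 0) * (if coprime b m then psi b else 0)"
    using subgroup_char_mult[OF assms(3) units units, of a b] by simp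
  show "(if coprime n m then psi n else 0) = 0 \<longleftrightarrow> \<not> coprime n m"
    using subgroup_char_nonzero[OF assms(1-3) units, of n] by simp
qed (use assms subgroup_char_one[OF assms(3)] in simp_all)

theorem subgroup_char_extends:
  assumes "m > 1"
  shows "unit_subgroup m H \<Longrightarrow> subgroup_char m H psi \<Longrightarrow>
    \<exists>chi. dirichlet_char m chi \<and> (\<forall>x\<in>H. chi x = psi x)"
proof (induction "card ({0..<m} - H)" arbitrary: H psi rule: less_induct)
  case less
  show ?case
  proof (cases "\<forall>x. coprime x m \<longrightarrow> x \<in> H")
    case True
    have "dirichlet_char m (\<lambda>n. if coprime n m then psi n else 0)"
      by (rule dirichlet_char_of_subgroup_char[OF assms less.prems]) (use True in blast)
    moreover have "\<forall>x\<in>H. (if coprime x m then psi x else 0) = psi x"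
      using unit_subgroup_coprime[OF less.prems(1)] by simp
    ultimately show ?thesis by blast
  next
    case False
    then obtain g where g: "coprime g m" "g \<notin> H" by blast
    obtain k where k: "k > 0" "g ^ k \<in> H" "\<And>r. 0 < r \<Longrightarrow> r < k \<Longrightarrow> g ^ r \<notin> H"
      using unit_subgroup_least_power[OF assms less.prems(1) g(1)] by blast
    obtain c where "c ^ k = psi (g ^ k)" using complex_root_exists[OF k(1)] .
    then interpret adjoin: subgroup_char_adjoin m H psi g k c
      using assms less.prems g(1) k by unfold_locales blast+
    have "[g = g mod m] (mod m)" by (simp add: cong_def)
    then have "g mod m \<in> adjoin.H'"
      by (rule unit_subgroup_cong[OF adjoin.unit_subgroup_H' adjoin.g_in_H'])
    moreover have "g mod m \<notin> H"
      using unit_subgroup_cong[OF less.prems(1), of "g mod m" g] g(2) by (auto simp: cong_def)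
    moreover have "g mod m \<in> {0..<m}" using assms by simp
    ultimately have "{0..<m} - adjoin.H' \<subset> {0..<m} - H" using adjoin.subset_H' by blast
    then have "card ({0..<m} - adjoin.H') < card ({0..<m} - H)"
      by (rule psubset_card_mono[rotated]) simp
    then obtain chi where chi: "dirichlet_char m chi" "\<forall>x\<in>adjoin.H'. chi x = adjoin.psi' x"
      using less.hyps adjoin.unit_subgroup_H' adjoin.subgroup_char_psi' by blast
    have "chi x = psi x" if "x \<in> H" for x
      using that chi(2) adjoin.subset_H' adjoin.psi'_on_subgroup[OF that] by auto
    with chi(1) show ?thesis by blast
  qed
qed

lemma dirichlet_char_separates:
  assumes "m > 1" "coprime x m" "\<not> [x = 1] (mod m)"
  obtains chi where "dirichlet_char m chi" "chi x \<noteq> 1"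
proof -
  define H where "H = {y. [y = 1] (mod m)}"
  have H: "unit_subgroup m H" using unit_subgroup_cong_one[of 1 m] unfolding H_def by simp
  have one: "subgroup_char m H (\<lambda>_. 1)" unfolding subgroup_char_def by simp
  obtain k where k: "k > 0" "x ^ k \<in> H" "\<And>r. 0 < r \<Longrightarrow> r < k \<Longrightarrow> x ^ r \<notin> H"
    using unit_subgroup_least_power[OF assms(1) H assms(2)] by blast
  have "k \<noteq> 1" using k(2) assms(3) unfolding H_def by auto
  with k(1) have "0 < 1 / real k" "1 / real k < 1" by auto
  have "1 / real k \<notin> \<int>"
  proof
    assume "1 / real k \<in> \<int>"
    then obtain z where "1 / real k = of_int z" by (elim Ints_cases)
    with \<open>0 < 1 / real k\<close> \<open>1 / real k < 1\<close> show False by simp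
  qed
  interpret adjoin: subgroup_char_adjoin m H "\<lambda>_. 1" x k "e (1 / real k)"
    using assms H one k by unfold_locales (auto simp: e_power e_eq_1_iff)
  obtain chi where "dirichlet_char m chi" "\<forall>y\<in>adjoin.H'. chi y = adjoin.psi' y"
    using subgroup_char_extends[OF assms(1) adjoin.unit_subgroup_H' adjoin.subgroup_char_psi'] by blast
  moreover have "chi x = e (1 / real k)" using calculation adjoin.g_in_H' adjoin.psi'_g by simp
  ultimately show ?thesis using that \<open>1 / real k \<notin> \<int>\<close> by (simp add: e_eq_1_iff)
qed

section \<open>Orthogonality\<close>

lemma inj_on_times_dirichlet_chars:
  assumes "\<And>n. coprime n m \<Longrightarrow> c n \<noteq> 0"
  shows "inj_on (\<lambda>chi n. c n * chi n) {chi. dirichlet_char m chi}"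
proof (rule inj_onI)
  fix a b
  assume "a \<in> {chi. dirichlet_char m chi}" "b \<in> {chi. dirichlet_char m chi}"
    and eq: "(\<lambda>n. c n * a n) = (\<lambda>n. c n * b n)"
  show "a = b"
  proof (rule dirichlet_char_eqI[of m])
    fix n
    assume "coprime n m"
    moreover have "c n * a n = c n * b n" using fun_cong[OF eq, of n] by simp
    ultimately show "a n = b n" using assms by simp
  qed (use \<open>a \<in> _\<close> \<open>b \<in> _\<close> in simp_all)
qed

lemma sum_dirichlet_chars:
  assumes "m > 1" "coprime x m"
  shows "(\<Sum>chi\<in>{chi. dirichlet_char m chi}. chi x) =
    (if [x = 1] (mod m) then of_nat (card {chi. dirichlet_char m chi}) else 0)"
proof (cases "[x = 1] (mod m)")
  case True
  then show ?thesis by (simp add: dirichlet_char_cong[OF _ True] dirichlet_char_one)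
next
  case False
  define X where "X = {chi. dirichlet_char m chi}"
  obtain c where c: "dirichlet_char m c" "c x \<noteq> 1"
    using dirichlet_char_separates[OF assms False] .
  define f where "f = (\<lambda>chi n. c n * chi n)"
  have inj: "inj_on f X"
    unfolding f_def X_def using dirichlet_char_eq_0_iff[OF c(1)] by (intro inj_on_times_dirichlet_chars) auto
  have "f ` X \<subseteq> X" unfolding f_def X_def using dirichlet_char_times[OF c(1)] by auto
  then have "f ` X = X" using endo_inj_surj finite_dirichlet_chars[OF assms(1)] inj unfolding X_def by blast
  then have "(\<Sum>chi\<in>X. chi x) = (\<Sum>chi\<in>X. f chi x)"
    using sum.reindex[OF inj, of "\<lambda>chi. chi x"] by simp
  also have "\<dots> = c x * (\<Sum>chi\<in>X. chi x)" unfolding f_def by (simp add: sum_distrib_left)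
  finally have "(1 - c x) * (\<Sum>chi\<in>X. chi x) = 0" by (simp add: algebra_simps)
  then show ?thesis using c(2) False unfolding X_def by simp
qed

lemma sum_dirichlet_char_residues:
  assumes "m > 1" and chi: "dirichlet_char m chi"
  shows "(\<Sum>x\<in>{0..<m}. chi x) = (if chi = principal_char m then of_nat (totient (nat m)) else 0)"
proof (cases "chi = principal_char m")
  case True
  have "(\<Sum>x\<in>{0..<m}. chi x) = of_nat (card {x \<in> {0..<m}. coprime x m})"
    unfolding True principal_char_def by (simp add: sum.inter_filter[symmetric])
  then show ?thesis using card_coprime_residues_int[OF assms(1)] True by simp
next
  case False
  then obtain y where y: "coprime y m" "chi y \<noteq> 1"
    using dirichlet_char_eqI[OF chi dirichlet_char_principal] assms(1)
    by (force simp: principal_char_def)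
  define h where "h = (\<lambda>x. (y * x) mod m)"
  have "inj_on h {0..<m}"
  proof (rule inj_onI)
    fix a b
    assume "a \<in> {0..<m}" "b \<in> {0..<m}" "h a = h b"
    then have "[a = b] (mod m)"
      using cong_mult_lcancel[OF y(1)] unfolding h_def cong_def by blast
    then show "a = b" using \<open>a \<in> {0..<m}\<close> \<open>b \<in> {0..<m}\<close> by (simp add: cong_def)
  qed
  moreover have "h ` {0..<m} \<subseteq> {0..<m}" unfolding h_def using assms(1) by auto
  ultimately have "h ` {0..<m} = {0..<m}" by (simp add: endo_inj_surj)
  then have "(\<Sum>x\<in>{0..<m}. chi x) = (\<Sum>x\<in>{0..<m}. chi (h x))"
    using sum.reindex[OF \<open>inj_on h {0..<m}\<close>, of chi] by simp
  also have "\<dots> = chi y * (\<Sum>x\<in>{0..<m}. chi x)"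
    unfolding h_def sum_distrib_left
    using dirichlet_char_cong[OF chi, of "y * x mod m" "y * x" for x] dirichlet_char_mult[OF chi]
    by (simp add: cong_def)
  finally have "(1 - chi y) * (\<Sum>x\<in>{0..<m}. chi x) = 0" by (simp add: algebra_simps)
  then show ?thesis using y(2) False by simp
qed

(* Double counting of the sum of chi(x) over characters chi and residues x. *)
lemma card_dirichlet_chars:
  assumes "m > 1"
  shows "card {chi. dirichlet_char m chi} = totient (nat m)"
proof -
  define X where "X = {chi. dirichlet_char m chi}"
  have "(\<Sum>x\<in>{0..<m}. \<Sum>chi\<in>X. chi x) = (\<Sum>x\<in>{0..<m}. if x = 1 then of_nat (card X) else 0)"
  proof (rule sum.cong)
    fix x
    assume x: "x \<in> {0..<m}"
    show "(\<Sum>chi\<in>X. chi x) = (if x = 1 then of_nat (card X) else 0)"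
    proof (cases "coprime x m")
      case True
      have "[x = 1] (mod m) \<longleftrightarrow> x = 1" using x assms by (auto simp: cong_def)
      then show ?thesis using sum_dirichlet_chars[OF assms True] unfolding X_def by simp
    next
      case False
      then have "x \<noteq> 1" by auto
      moreover have "(\<Sum>chi\<in>X. chi x) = 0"
        using False by (intro sum.neutral) (auto simp: X_def dirichlet_char_eq_0_iff)
      ultimately show ?thesis by simp
    qed
  qed simp
  also have "\<dots> = of_nat (card X)" using assms by simp
  finally have "of_nat (card X) = (\<Sum>chi\<in>X. \<Sum>x\<in>{0..<m}. chi x)" by (simp add: sum.swap[of _ X])
  also have "\<dots> = (\<Sum>chi\<in>X. if chi = principal_char m then of_nat (totient (nat m)) else 0)"
    unfolding X_def using sum_dirichlet_char_residues[OF assms] by simp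
  also have "\<dots> = of_nat (totient (nat m))"
    using finite_dirichlet_chars[OF assms] dirichlet_char_principal assms unfolding X_def by simp
  finally show ?thesis unfolding X_def by (simp only: of_nat_eq_iff)
qed

section \<open>The characters in G1(q)\<close>

lemma e_unipotent_mult:
  assumes "[x = 1] (mod q)" "[y = 1] (mod q)"
  shows "e (of_int (x * y - 1) / of_int (q\<^sup>2)) =
    e (of_int (x - 1) / of_int (q\<^sup>2)) * e (of_int (y - 1) / of_int (q\<^sup>2))"
proof -
  obtain a b where "x - 1 = q * a" "y - 1 = q * b"
    using assms by (metis cong_iff_dvd_diff dvdE)
  then have "x * y - 1 - ((x - 1) + (y - 1)) = q\<^sup>2 * (a * b)"
    by (simp add: algebra_simps power2_eq_square)
  then have "[x * y - 1 = (x - 1) + (y - 1)] (mod q\<^sup>2)"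
    unfolding cong_iff_dvd_diff by simp
  then have "e (of_int (x * y - 1) / of_int (q\<^sup>2)) = e (of_int ((x - 1) + (y - 1)) / of_int (q\<^sup>2))"
    by (rule e_of_int_divide_cong)
  then show ?thesis by (simp only: of_int_add add_divide_distrib e_add)
qed

lemma G1_dirichlet_char: "\<xi> \<in> G1 q \<Longrightarrow> dirichlet_char (q\<^sup>2) \<xi>"
  and G1_unipotent: "\<xi> \<in> G1 q \<Longrightarrow> [x = 1] (mod q) \<Longrightarrow> \<xi> x = e (of_int (x - 1) / of_int (q\<^sup>2))"
  unfolding G1_def by blast+

lemma G1_nonempty:
  assumes "q \<ge> 2"
  obtains \<xi> where "\<xi> \<in> G1 q"
proof -
  define H where "H = {x. [x = 1] (mod q)}"
  define psi where "psi x = e (of_int (x - 1) / of_int (q\<^sup>2))" for x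
  have "q\<^sup>2 > 1" using assms by (simp add: power2_eq_square less_1_mult)
  have H: "unit_subgroup (q\<^sup>2) H" unfolding H_def by (rule unit_subgroup_cong_one) simp
  have "subgroup_char (q\<^sup>2) H psi"
    unfolding subgroup_char_def
  proof (intro conjI ballI allI impI)
    show "psi 1 = 1" by (simp add: psi_def)
    fix x y
    assume "x \<in> H"
    show "psi (x * y) = psi x * psi y" if "y \<in> H"
      using e_unipotent_mult \<open>x \<in> H\<close> that unfolding psi_def H_def by blast
    show "psi y = psi x" if "[x = y] (mod q\<^sup>2)"
      using e_of_int_divide_cong[of "y - 1" "x - 1" "q\<^sup>2"] cong_diff[OF cong_sym[OF that] cong_refl[of 1]]
      unfolding psi_def by simp
  qed
  then obtain chi where "dirichlet_char (q\<^sup>2) chi" "\<forall>x\<in>H. chi x = psi x"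
    using subgroup_char_extends[OF \<open>q\<^sup>2 > 1\<close> H] by blast
  then have "chi \<in> G1 q" unfolding G1_def H_def psi_def by simp
  then show ?thesis by (rule that)
qed

lemma G1_eq_image:
  assumes "q \<ge> 2" and \<xi>0: "\<xi>0 \<in> G1 q"
  shows "G1 q = (\<lambda>chi n. \<xi>0 n * chi n) ` {chi. dirichlet_char q chi}"
proof (intro equalityI subsetI)
  have "q\<^sup>2 > 1" using assms by (simp add: power2_eq_square less_1_mult)
  have dc0: "dirichlet_char (q\<^sup>2) \<xi>0" by (rule G1_dirichlet_char[OF \<xi>0])
  fix \<xi>
  assume \<xi>: "\<xi> \<in> G1 q"
  define chi where "chi n = \<xi> n * cnj (\<xi>0 n)" for n
  have "dirichlet_char (q\<^sup>2) chi"
    unfolding chi_def by (intro dirichlet_char_times dirichlet_char_cnj G1_dirichlet_char \<xi> \<xi>0)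
  moreover have "chi x = 1" if "[x = 1] (mod q)" for x
    unfolding chi_def using G1_unipotent[OF \<xi> that] G1_unipotent[OF \<xi>0 that] cnj_e_mult
    by (simp add: mult.commute)
  ultimately have "dirichlet_char q chi"
    using assms(1) by (intro dirichlet_char_from_power_modulus[of q 2]) simp_all
  moreover have "\<xi> = (\<lambda>n. \<xi>0 n * chi n)"
  proof (rule dirichlet_char_eqI)
    show "dirichlet_char (q\<^sup>2) \<xi>" by (rule G1_dirichlet_char[OF \<xi>])
    show "dirichlet_char (q\<^sup>2) (\<lambda>n. \<xi>0 n * chi n)"
      using dc0 \<open>dirichlet_char (q\<^sup>2) chi\<close> by (rule dirichlet_char_times)
    fix n
    assume "coprime n (q\<^sup>2)"
    then show "\<xi> n = \<xi>0 n * chi n"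
      using cnj_dirichlet_char_mult[OF dc0 \<open>q\<^sup>2 > 1\<close>] unfolding chi_def
      by (metis mult.assoc mult.commute mult_1_left)
  qed
  ultimately show "\<xi> \<in> (\<lambda>chi n. \<xi>0 n * chi n) ` {chi. dirichlet_char q chi}" by blast
next
  fix \<xi>
  assume "\<xi> \<in> (\<lambda>chi n. \<xi>0 n * chi n) ` {chi. dirichlet_char q chi}"
  then obtain chi where chi: "dirichlet_char q chi" and \<xi>: "\<xi> = (\<lambda>n. \<xi>0 n * chi n)" by blast
  have "dirichlet_char (q\<^sup>2) \<xi>"
    unfolding \<xi> using G1_dirichlet_char[OF \<xi>0] dirichlet_char_power_modulus[OF chi]
    by (intro dirichlet_char_times) simp_all
  moreover have "chi x = 1" if "[x = 1] (mod q)" for x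
    using dirichlet_char_cong[OF chi that] dirichlet_char_one[OF chi] by simp
  ultimately show "\<xi> \<in> G1 q" using G1_unipotent[OF \<xi>0] unfolding G1_def \<xi> by simp
qed

lemma inj_on_G1_image:
  assumes "\<xi>0 \<in> G1 q"
  shows "inj_on (\<lambda>chi n. \<xi>0 n * chi n) {chi. dirichlet_char q chi}"
  using dirichlet_char_eq_0_iff[OF G1_dirichlet_char[OF assms]]
  by (intro inj_on_times_dirichlet_chars) simp

lemma card_G1:
  assumes "q \<ge> 2"
  shows "card (G1 q) = totient (nat q)"
proof -
  obtain \<xi>0 where \<xi>0: "\<xi>0 \<in> G1 q" using G1_nonempty[OF assms] .
  have "q > 1" using assms by simp
  then show ?thesis
    unfolding G1_eq_image[OF assms \<xi>0] card_image[OF inj_on_G1_image[OF \<xi>0]]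
    by (rule card_dirichlet_chars)
qed

lemma finite_G1:
  assumes "q \<ge> 2"
  shows "finite (G1 q)"
proof -
  obtain \<xi>0 where \<xi>0: "\<xi>0 \<in> G1 q" using G1_nonempty[OF assms] .
  have "q > 1" using assms by simp
  then show ?thesis
    unfolding G1_eq_image[OF assms \<xi>0] by (intro finite_imageI finite_dirichlet_chars)
qed

lemma G1_cnj_mult_cong:
  assumes "q \<ge> 2" and \<xi>: "\<xi> \<in> G1 q" and "[n = n'] (mod q)" and nb: "[n * nb = 1] (mod q)"
  shows "cnj (\<xi> n) * \<xi> n' = e (of_int nb / of_int q * of_int ((n' - n) div q))"
proof -
  have "q\<^sup>2 > 1" using assms by (simp add: power2_eq_square less_1_mult)
  define d where "d = (n' - n) div q"
  have n': "n' = n + q * d"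
    using \<open>[n = n'] (mod q)\<close> unfolding d_def by (simp add: cong_iff_dvd_diff dvd_diff_commute)
  have "coprime n q" using nb coprime_iff_invertible_int by blast
  then have "coprime n (q\<^sup>2)" by simp
  then obtain ns where ns: "[n * ns = 1] (mod q\<^sup>2)" using cong_solve_coprime_int by blast
  then obtain u where u: "n * ns - 1 = q\<^sup>2 * u" by (metis cong_iff_dvd_diff dvdE)
  have "[nb = (n * ns) * nb] (mod q)"
    using cong_scalar_right[OF cong_dvd_modulus[OF ns, of q], of nb] by (simp add: cong_sym_eq)
  also have "(n * ns) * nb = ns * (n * nb)" by (simp add: mult_ac)
  also have "[ns * (n * nb) = ns] (mod q)" using cong_scalar_left[OF nb, of ns] by simp
  finally obtain t where t: "ns - nb = q * t" by (metis cong_iff_dvd_diff cong_sym dvdE)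
  have "ns * n' - 1 = (n * ns - 1) + q * d * (ns - nb) + q * (nb * d)"
    unfolding n' by (simp add: algebra_simps)
  also have "\<dots> = q\<^sup>2 * (u + d * t) + q * (nb * d)"
    unfolding u t by (simp add: algebra_simps power2_eq_square)
  finally have expand: "ns * n' - 1 = q\<^sup>2 * (u + d * t) + q * (nb * d)" .
  then have rep: "[ns * n' - 1 = q * (nb * d)] (mod q\<^sup>2)" by (simp add: cong_iff_dvd_diff)
  have "ns * n' - 1 = q * (q * (u + d * t) + nb * d)"
    using expand by (simp add: algebra_simps power2_eq_square)
  then have "[ns * n' = 1] (mod q)" by (simp add: cong_iff_dvd_diff)
  have "cnj (\<xi> n) * \<xi> n' = \<xi> (ns * n')"
    using cnj_dirichlet_char[OF G1_dirichlet_char[OF \<xi>] \<open>q\<^sup>2 > 1\<close> ns]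
      dirichlet_char_mult[OF G1_dirichlet_char[OF \<xi>]] by simp
  also have "\<dots> = e (of_int (q * (nb * d)) / of_int (q\<^sup>2))"
    using G1_unipotent[OF \<xi> \<open>[ns * n' = 1] (mod q)\<close>] e_of_int_divide_cong[OF rep] by simp
  also have "\<dots> = e (of_int nb / of_int q * of_int d)"
    using assms(1) by (simp add: power2_eq_square)
  finally show ?thesis unfolding d_def .
qed

lemma sum_G1_cnj_mult:
  assumes "q \<ge> 2" and nbar: "\<forall>n. coprime n q \<longrightarrow> [n * nbar n = 1] (mod q)"
  shows "(\<Sum>\<xi>\<in>G1 q. cnj (\<xi> n) * \<xi> n') =
    (if coprime (n * n') q \<and> [n = n'] (mod q)
     then of_nat (totient (nat q)) * e (of_int (nbar n) / of_int q * of_int ((n' - n) div q))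
     else 0)"
proof -
  have "q > 1" using assms by simp
  obtain \<xi>0 where \<xi>0: "\<xi>0 \<in> G1 q" using G1_nonempty[OF assms(1)] .
  define X where "X = {chi. dirichlet_char q chi}"
  have G1: "G1 q = (\<lambda>chi n. \<xi>0 n * chi n) ` X" unfolding X_def by (rule G1_eq_image[OF assms(1) \<xi>0])
  have inj: "inj_on (\<lambda>chi n. \<xi>0 n * chi n) X" unfolding X_def by (rule inj_on_G1_image[OF \<xi>0])
  consider "\<not> coprime (n * n') q" | "coprime (n * n') q" "[n = n'] (mod q)"
    | "coprime (n * n') q" "\<not> [n = n'] (mod q)" by blast
  then show ?thesis
  proof cases
    case 1
    have "cnj (\<xi> n) * \<xi> n' = 0" if "\<xi> \<in> G1 q" for \<xi>
    proof -
      have "\<xi> n = 0 \<or> \<xi> n' = 0"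
        using 1 dirichlet_char_eq_0_iff[OF G1_dirichlet_char[OF that]] by simp
      then show ?thesis by auto
    qed
    then have "(\<Sum>\<xi>\<in>G1 q. cnj (\<xi> n) * \<xi> n') = 0" by (rule sum.neutral[rule_format])
    moreover have "\<not> (coprime (n * n') q \<and> [n = n'] (mod q))" using 1 by blast
    ultimately show ?thesis by (simp only: if_False)
  next
    case 2
    then have "(\<Sum>\<xi>\<in>G1 q. cnj (\<xi> n) * \<xi> n') =
        (\<Sum>\<xi>\<in>G1 q. e (of_int (nbar n) / of_int q * of_int ((n' - n) div q)))"
      using G1_cnj_mult_cong[OF assms(1) _ _ nbar[rule_format]] by simp
    then show ?thesis using 2 card_G1[OF assms(1)] by simp
  next
    case 3
    then have n: "coprime n q" "[n * nbar n = 1] (mod q)" and "coprime n' q" using nbar by auto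
    have "coprime (nbar n) q" using n(2) coprime_iff_invertible_int by (metis mult.commute)
    then have "coprime (nbar n * n') q" using \<open>coprime n' q\<close> by simp
    have "\<not> [nbar n * n' = 1] (mod q)"
    proof
      assume "[nbar n * n' = 1] (mod q)"
      then have "[n = n * (nbar n * n')] (mod q)"
        using cong_scalar_left[of 1 "nbar n * n'" q n] by (simp add: cong_sym_eq)
      also have "n * (nbar n * n') = (n * nbar n) * n'" by (rule mult.assoc[symmetric])
      also have "[(n * nbar n) * n' = n'] (mod q)" using cong_scalar_right[OF n(2), of n'] by simp
      finally show False using 3(2) by simp
    qed
    have "(\<Sum>\<xi>\<in>G1 q. cnj (\<xi> n) * \<xi> n') = (\<Sum>chi\<in>X. cnj (\<xi>0 n * chi n) * (\<xi>0 n' * chi n'))"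
      unfolding G1 by (simp add: sum.reindex[OF inj])
    also have "\<dots> = (\<Sum>chi\<in>X. (cnj (\<xi>0 n) * \<xi>0 n') * chi (nbar n * n'))"
    proof (rule sum.cong[OF refl])
      fix chi
      assume "chi \<in> X"
      then have chi: "dirichlet_char q chi" by (simp add: X_def)
      show "cnj (\<xi>0 n * chi n) * (\<xi>0 n' * chi n') = (cnj (\<xi>0 n) * \<xi>0 n') * chi (nbar n * n')"
        using cnj_dirichlet_char[OF chi \<open>q > 1\<close> n(2)] dirichlet_char_mult[OF chi, of "nbar n" n']
        by (simp add: mult_ac)
    qed
    also have "\<dots> = 0"
      using sum_dirichlet_chars[OF \<open>q > 1\<close> \<open>coprime (nbar n * n') q\<close>] \<open>\<not> [nbar n * n' = 1] (mod q)\<close>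
      by (simp add: sum_distrib_left[symmetric] X_def)
    finally show ?thesis using 3 by simp
  qed
qed

lemma of_real_norm_sum_squared:
  fixes f :: "'a \<Rightarrow> complex"
  shows "complex_of_real ((cmod (sum f I))\<^sup>2) = (\<Sum>n\<in>I. \<Sum>n'\<in>I. cnj (f n) * f n')"
proof -
  have "complex_of_real ((cmod (sum f I))\<^sup>2) = cnj (sum f I) * sum f I"
    unfolding complex_norm_square by (rule mult.commute)
  also have "\<dots> = (\<Sum>n\<in>I. \<Sum>n'\<in>I. cnj (f n) * f n')"
    by (simp add: sum_product)
  finally show ?thesis .
qed

lemma G1_mean_square:
  assumes "q \<ge> 2" and nbar: "\<forall>n. coprime n q \<longrightarrow> [n * nbar n = 1] (mod q)"
  shows "complex_of_real (\<Sum>\<xi>\<in>G1 q. (cmod (\<Sum>n\<in>I. a n * \<xi> n))\<^sup>2) =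
    of_nat (totient (nat q)) * (\<Sum>n\<in>I. \<Sum>n'\<in>I.
      if coprime (n * n') q \<and> [n = n'] (mod q)
      then cnj (a n) * a n' * e (of_int (nbar n) / of_int q * of_int ((n' - n) div q))
      else 0)"
proof -
  have "complex_of_real (\<Sum>\<xi>\<in>G1 q. (cmod (\<Sum>n\<in>I. a n * \<xi> n))\<^sup>2) =
      (\<Sum>\<xi>\<in>G1 q. \<Sum>n\<in>I. \<Sum>n'\<in>I. cnj (a n * \<xi> n) * (a n' * \<xi> n'))"
    unfolding of_real_sum of_real_norm_sum_squared ..
  also have "\<dots> = (\<Sum>\<xi>\<in>G1 q. \<Sum>n\<in>I. \<Sum>n'\<in>I. cnj (a n) * a n' * (cnj (\<xi> n) * \<xi> n'))"
    by (simp add: mult_ac)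
  also have "\<dots> = (\<Sum>n\<in>I. \<Sum>n'\<in>I. cnj (a n) * a n' * (\<Sum>\<xi>\<in>G1 q. cnj (\<xi> n) * \<xi> n'))"
    by (simp add: sum_distrib_left sum.swap[of _ "G1 q"])
  also have "\<dots> = of_nat (totient (nat q)) * (\<Sum>n\<in>I. \<Sum>n'\<in>I.
      if coprime (n * n') q \<and> [n = n'] (mod q)
      then cnj (a n) * a n' * e (of_int (nbar n) / of_int q * of_int ((n' - n) div q))
      else 0)"
    unfolding sum_G1_cnj_mult[OF assms] sum_distrib_left by (intro sum.cong refl) simp
  finally show ?thesis .
qed

theorem mainTheorem1:
  fixes q M :: int and N :: nat and a :: "int \<Rightarrow> complex" and nbar :: "int \<Rightarrow> int"
  assumes q2: "q \<ge> 2"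
    and nbar: "\<forall>n. coprime n q \<longrightarrow> [n * nbar n = 1] (mod q)"
  shows "complex_of_real (real_of_int q / real (totient (nat q)) *
           (\<Sum>\<xi>\<in>G1 q. (cmod (\<Sum>n\<in>{M+1..M + int N}. a n * \<xi> n))\<^sup>2))
         = of_int q * (\<Sum>n\<in>{M+1..M + int N}. \<Sum>n'\<in>{M+1..M + int N}.
              if coprime (n * n') q \<and> [n = n'] (mod q)
              then cnj (a n) * a n' *
                   e (real_of_int (nbar n) / real_of_int q * (real_of_int ((n' - n) div q)))
              else 0)
         \<and> finite (G1 q)
         \<and> card (G1 q) = totient (nat q)
         \<and> (\<forall>\<xi>0\<in>G1 q. G1 q = {(\<lambda>n. \<xi>0 n * chi n) | chi. dirichlet_char q chi})"
proof -
  have "totient (nat q) > 0" using q2 by simp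
  then show ?thesis
    using G1_mean_square[OF q2 nbar, of a "{M+1..M + int N}"] finite_G1[OF q2] card_G1[OF q2]
      G1_eq_image[OF q2] by (simp add: setcompr_eq_image)
qed

end
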